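(* Let $f:\mathbb{Z}^n\to\mathbb{R}\cup\{+\infty\}$ be an M-convex function with bounded $\operatorname{dom} f$, and $x_0\in\operatorname{dom} f$. Run algorithm M-SD from $x_0$ (with any choice of minimizing pair in each iteration), and let $x^*$ be its output. Then for every $i\in N$, along the sequence of iterates the component $x(i)$ is non-increasing if $x^*(i)\le x_0(i)$ and non-decreasing if $x^*(i)\ge x_0(i)$.
   Context: $N=\{1,\dots,n\}$; $\chi_i\in\{0,1\}^n$ is the $i$-th unit vector. For $f:\mathbb{Z}^n\to\mathbb{R}\cup\{+\infty\}$, $\operatorname{dom} f=\{x\in\mathbb{Z}^n: f(x)<+\infty\}$. $f$ is M-convex if $\operatorname{dom} f\neq\emptyset$ and for all $x,y\in\operatorname{dom} f$ and every $i$ with $x(i)>y(i)$ there is $j$ with $x(j)<y(j)$ such that $f(x)+f(y)\ge f(x-\chi_i+\chi_j)+f(y+\chi_i-\chi_j)$. For $x\in\operatorname{dom} f$ and $i,j\in N$, $f'(x;i,j)=f(x+\chi_i-\chi_j)-f(x)$ (possibly $+\infty$). Algorithm M-SD: set $x:=x_0$; repeatedly choose $i,j\in N$ minimizing $f'(x;i,j)$; if $f'(x;i,j)=0$ output $x$ and stop; otherwise set $x:=x+\chi_i-\chi_j$ and repeat. *)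

theory Defs
  imports Complex_Main "HOL-Library.Extended_Real"
begin

text \<open>The ground set N is modelled by a finite type 'a; points of Z^N are functions 'a => int.
  Functions with values in R \<union> {+\<infinity>} are modelled as ereal-valued functions never equal to -\<infinity>.\<close>

definition unitv :: "'a \<Rightarrow> 'a \<Rightarrow> int" where
  "unitv i = (\<lambda>k. if k = i then 1 else 0)"

definition vadd :: "('a \<Rightarrow> int) \<Rightarrow> ('a \<Rightarrow> int) \<Rightarrow> ('a \<Rightarrow> int)" where
  "vadd x y = (\<lambda>k. x k + y k)"

definition vsub :: "('a \<Rightarrow> int) \<Rightarrow> ('a \<Rightarrow> int) \<Rightarrow> ('a \<Rightarrow> int)" where
  "vsub x y = (\<lambda>k. x k - y k)"

definition dom_f :: "(('a \<Rightarrow> int) \<Rightarrow> ereal) \<Rightarrow> ('a \<Rightarrow> int) set" where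
  "dom_f f = {x. f x < \<infinity>}"

definition M_convex :: "(('a \<Rightarrow> int) \<Rightarrow> ereal) \<Rightarrow> bool" where
  "M_convex f \<longleftrightarrow> dom_f f \<noteq> {} \<and>
     (\<forall>x\<in>dom_f f. \<forall>y\<in>dom_f f. \<forall>i. x i > y i \<longrightarrow>
        (\<exists>j. x j < y j \<and>
           f x + f y \<ge> f (vadd (vsub x (unitv i)) (unitv j)) + f (vsub (vadd y (unitv i)) (unitv j))))"

definition dirder :: "(('a \<Rightarrow> int) \<Rightarrow> ereal) \<Rightarrow> ('a \<Rightarrow> int) \<Rightarrow> 'a \<Rightarrow> 'a \<Rightarrow> ereal" where
  "dirder f x i j = f (vsub (vadd x (unitv i)) (unitv j)) - f x"

definition MSD_step :: "(('a \<Rightarrow> int) \<Rightarrow> ereal) \<Rightarrow> ('a \<Rightarrow> int) \<Rightarrow> ('a \<Rightarrow> int) \<Rightarrow> bool" where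
  "MSD_step f x y \<longleftrightarrow> (\<exists>i j. (\<forall>p q. dirder f x i j \<le> dirder f x p q) \<and>
       dirder f x i j \<noteq> 0 \<and> y = vsub (vadd x (unitv i)) (unitv j))"

definition MSD_stop :: "(('a \<Rightarrow> int) \<Rightarrow> ereal) \<Rightarrow> ('a \<Rightarrow> int) \<Rightarrow> bool" where
  "MSD_stop f x \<longleftrightarrow> (\<exists>i j. (\<forall>p q. dirder f x i j \<le> dirder f x p q) \<and> dirder f x i j = 0)"

definition MSD_run :: "(('a \<Rightarrow> int) \<Rightarrow> ereal) \<Rightarrow> ('a \<Rightarrow> int) \<Rightarrow> (nat \<Rightarrow> ('a \<Rightarrow> int)) \<Rightarrow> nat \<Rightarrow> bool" where
  "MSD_run f x0 xs m \<longleftrightarrow> xs 0 = x0 \<and> (\<forall>k<m. \<not> MSD_stop f (xs k) \<and> MSD_step f (xs k) (xs (Suc k)))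
     \<and> MSD_stop f (xs m)"

end

theory Submission
  imports Defs
begin

text \<open>
  Call a point x up-stable in coordinate a if no move x + \<chi>_a - \<chi>_t decreases f, and down-stable
  in b if no move x + \<chi>_s - \<chi>_b does. A steepest step x \<rightarrow> x + \<chi>_s - \<chi>_t makes the new point
  up-stable in t and down-stable in s, and M-convexity shows that later steepest steps preserve
  these properties. Hence a coordinate lowered at some iteration is never raised at another one,
  and vice versa: every coordinate moves monotonically along the run, in the direction of its net
  change.
\<close>

definition move :: "('a \<Rightarrow> int) \<Rightarrow> 'a \<Rightarrow> 'a \<Rightarrow> ('a \<Rightarrow> int)" where
  "move x i j = vsub (vadd x (unitv i)) (unitv j)"

lemma move_apply: "move x i j k = x k + (if k = i then 1 else 0) - (if k = j then 1 else 0)"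
  by (simp add: move_def vsub_def vadd_def unitv_def)

lemma move_same [simp]: "move x i i = x"
  by (simp add: fun_eq_iff move_apply)

lemma move_move_cancel_left: "move (move x s t) t u = move x s u"
  by (simp add: fun_eq_iff move_apply)

lemma move_move_cancel_right: "move (move x s t) u s = move x u t"
  by (simp add: fun_eq_iff move_apply)

lemma uminus_move: "- move x i j = move (- x) j i"
  by (simp add: fun_eq_iff move_apply)

lemma uminus_uminus_fun [simp]: "- (- x) = (x :: 'a \<Rightarrow> int)"
  by (simp add: fun_eq_iff)

lemma M_convex_move:
  "M_convex f \<longleftrightarrow> dom_f f \<noteq> {} \<and>
     (\<forall>x\<in>dom_f f. \<forall>y\<in>dom_f f. \<forall>i. x i > y i \<longrightarrow>
        (\<exists>j. x j < y j \<and> f (move x j i) + f (move y i j) \<le> f x + f y))"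
proof -
  have "vadd (vsub x (unitv i)) (unitv j) = move x j i" for x :: "'a \<Rightarrow> int" and i j
    by (simp add: fun_eq_iff move_apply vsub_def vadd_def unitv_def)
  then show ?thesis
    by (simp add: M_convex_def move_def)
qed

lemma M_convex_exchange:
  assumes "M_convex f" "f x < \<infinity>" "f y < \<infinity>" "x i > y i"
  shows "\<exists>j. x j < y j \<and> f (move x j i) + f (move y i j) \<le> f x + f y"
  using assms by (auto simp: M_convex_move dom_f_def)

lemma M_convex_reflect:
  assumes "M_convex f"
  shows "M_convex (\<lambda>x. f (- x))"
  unfolding M_convex_move
proof (intro conjI ballI allI impI)
  obtain x where "f x < \<infinity>"
    using assms by (auto simp: M_convex_def dom_f_def)
  then have "- x \<in> dom_f (\<lambda>x. f (- x))"
    by (simp add: dom_f_def)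
  then show "dom_f (\<lambda>x. f (- x)) \<noteq> {}"
    by blast
next
  fix x y i
  assume "x \<in> dom_f (\<lambda>x. f (- x))" "y \<in> dom_f (\<lambda>x. f (- x))" "x i > y i"
  then obtain j where "(- y) j < (- x) j"
    and "f (move (- y) j i) + f (move (- x) i j) \<le> f (- y) + f (- x)"
    using M_convex_exchange[OF assms, of "- y" "- x" i] by (auto simp: dom_f_def)
  then show "\<exists>j. x j < y j \<and> f (- move x j i) + f (- move y i j) \<le> f (- x) + f (- y)"
    by (auto simp: uminus_move add.commute)
qed

definition steepest_descent :: "(('a \<Rightarrow> int) \<Rightarrow> ereal) \<Rightarrow> ('a \<Rightarrow> int) \<Rightarrow> 'a \<Rightarrow> 'a \<Rightarrow> bool" where
  "steepest_descent f x s t \<longleftrightarrow> f (move x s t) < f x \<and> (\<forall>p q. f (move x s t) \<le> f (move x p q))"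

definition up_stable :: "(('a \<Rightarrow> int) \<Rightarrow> ereal) \<Rightarrow> ('a \<Rightarrow> int) \<Rightarrow> 'a \<Rightarrow> bool" where
  "up_stable f x a \<longleftrightarrow> (\<forall>t. f x \<le> f (move x a t))"

definition down_stable :: "(('a \<Rightarrow> int) \<Rightarrow> ereal) \<Rightarrow> ('a \<Rightarrow> int) \<Rightarrow> 'a \<Rightarrow> bool" where
  "down_stable f x b \<longleftrightarrow> (\<forall>s. f x \<le> f (move x s b))"

lemma steepest_descent_distinct: "steepest_descent f x s t \<Longrightarrow> s \<noteq> t"
  by (auto simp: steepest_descent_def)

lemma steepest_descent_reflect:
  "steepest_descent f x s t \<longleftrightarrow> steepest_descent (\<lambda>y. f (- y)) (- x) t s"
  by (auto simp: steepest_descent_def uminus_move)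

lemma down_stable_reflect: "down_stable f x b \<longleftrightarrow> up_stable (\<lambda>y. f (- y)) (- x) b"
  by (simp add: down_stable_def up_stable_def uminus_move)

lemma steepest_descent_MSD_step:
  assumes fin: "\<bar>f x\<bar> \<noteq> \<infinity>" and noninf: "\<forall>y. f y \<noteq> -\<infinity>"
    and min: "\<forall>p q. dirder f x s t \<le> dirder f x p q" and nonzero: "dirder f x s t \<noteq> 0"
  shows "steepest_descent f x s t"
proof -
  have dirder_move: "dirder f x p q = f (move x p q) - f x" for p q
    by (simp add: dirder_def move_def)
  have "dirder f x s t < 0"
    using min[rule_format, of s s] nonzero fin by (simp add: dirder_move order_less_le)
  moreover have "f (move x s t) \<le> f (move x p q)" for p q
    using min[rule_format, of p q] fin noninf
    by (cases "f x"; cases "f (move x s t)"; cases "f (move x p q)") (auto simp: dirder_move)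
  ultimately show ?thesis
    using fin noninf[rule_format, of "move x s t"]
    by (cases "f x"; cases "f (move x s t)") (auto simp: steepest_descent_def dirder_move)
qed

lemma up_stable_after_steepest_descent:
  assumes "steepest_descent f x s t"
  shows "up_stable f (move x s t) t"
  using assms by (simp add: steepest_descent_def up_stable_def move_move_cancel_left)

lemma down_stable_after_steepest_descent:
  assumes "steepest_descent f x s t"
  shows "down_stable f (move x s t) s"
  using assms by (simp add: steepest_descent_def down_stable_def move_move_cancel_right)

lemma ereal_le_of_add_le_add:
  fixes a b c d :: ereal
  assumes "c + d \<le> a + b" "\<bar>b\<bar> \<noteq> \<infinity>" "b \<le> d"
  shows "c \<le> a"
  using assms by (cases a; cases b; cases c; cases d) auto

text \<open>The exchange is applied to x and the hypothetical improvement z of the new point.\<close>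
lemma up_stable_preserved:
  assumes mconv: "M_convex f" and noninf: "\<forall>y. f y \<noteq> -\<infinity>" and fin: "f x < \<infinity>"
    and stable: "up_stable f x a" and steep: "steepest_descent f x s t"
  shows "up_stable f (move x s t) a"
  unfolding up_stable_def
proof (rule allI, rule ccontr)
  fix u
  let ?y = "move x s t" and ?z = "move (move x s t) a u"
  assume "\<not> f ?y \<le> f ?z"
  then have improves: "f ?z < f ?y"
    by simp
  have decrease: "f ?y < f x" and steepest: "\<And>p q. f ?y \<le> f (move x p q)"
    using steep by (auto simp: steepest_descent_def)
  have "a \<noteq> s"
  proof
    assume "a = s"
    then have "f x \<le> f ?y"
      using stable by (simp add: up_stable_def)
    then show False
      using decrease by simp
  qed
  have "a \<noteq> t"
  proof
    assume "a = t"
    then have "?z = move x s u"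
      by (simp add: move_move_cancel_left)
    then show False
      using improves steepest[of s u] by simp
  qed
  have "u \<noteq> a"
    using improves by auto
  have raised: "?z a > x a"
    using \<open>a \<noteq> s\<close> \<open>a \<noteq> t\<close> \<open>u \<noteq> a\<close> by (simp add: move_apply)
  have zfin: "f ?z < \<infinity>"
    using improves decrease fin by (meson less_trans)
  obtain w where lowered: "?z w < x w"
    and exchange: "f (move ?z w a) + f (move x a w) \<le> f ?z + f x"
    using M_convex_exchange[OF mconv zfin fin raised] by blast
  have "\<bar>f x\<bar> \<noteq> \<infinity>" "f x \<le> f (move x a w)"
    using fin noninf stable by (auto simp: up_stable_def)
  then have reverted: "f (move ?z w a) \<le> f ?z"
    by (rule ereal_le_of_add_le_add[OF exchange])
  have "w = t \<or> w = u"
    using lowered \<open>a \<noteq> s\<close> by (auto simp: move_apply split: if_splits)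
  then have "move ?z w a = move x s u \<or> move ?z w a = ?y"
    using \<open>a \<noteq> s\<close> \<open>a \<noteq> t\<close> \<open>u \<noteq> a\<close> by (auto simp: fun_eq_iff move_apply)
  then show False
    using reverted improves steepest[of s u] by auto
qed

lemma down_stable_preserved:
  assumes mconv: "M_convex f" and noninf: "\<forall>y. f y \<noteq> -\<infinity>" and fin: "f x < \<infinity>"
    and stable: "down_stable f x b" and steep: "steepest_descent f x s t"
  shows "down_stable f (move x s t) b"
proof -
  have "up_stable (\<lambda>y. f (- y)) (move (- x) t s) b"
    using up_stable_preserved[OF M_convex_reflect[OF mconv]] noninf fin
      stable[THEN down_stable_reflect[THEN iffD1]] steep[THEN steepest_descent_reflect[THEN iffD1]]
    by simp
  then show ?thesis
    by (simp add: down_stable_reflect uminus_move[symmetric])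
qed

definition steepest_path ::
    "(('a \<Rightarrow> int) \<Rightarrow> ereal) \<Rightarrow> (nat \<Rightarrow> ('a \<Rightarrow> int)) \<Rightarrow> (nat \<Rightarrow> 'a) \<Rightarrow> (nat \<Rightarrow> 'a) \<Rightarrow> nat \<Rightarrow> bool" where
  "steepest_path f xs I J m \<longleftrightarrow>
     (\<forall>k<m. steepest_descent f (xs k) (I k) (J k) \<and> xs (Suc k) = move (xs k) (I k) (J k))"

lemma MSD_run_steepest_path:
  assumes noninf: "\<forall>y. f y \<noteq> -\<infinity>" and x0: "x0 \<in> dom_f f" and run: "MSD_run f x0 xs m"
  obtains I J where "steepest_path f xs I J m"
proof -
  have "\<forall>k. \<exists>i j. k < m \<longrightarrow> (\<forall>p q. dirder f (xs k) i j \<le> dirder f (xs k) p q) \<and>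
       dirder f (xs k) i j \<noteq> 0 \<and> xs (Suc k) = move (xs k) i j"
    using run by (auto simp: MSD_run_def MSD_step_def move_def)
  then obtain I J where IJ: "\<And>k. k < m \<Longrightarrow>
      (\<forall>p q. dirder f (xs k) (I k) (J k) \<le> dirder f (xs k) p q) \<and>
      dirder f (xs k) (I k) (J k) \<noteq> 0 \<and> xs (Suc k) = move (xs k) (I k) (J k)"
    by metis
  have "k \<le> m \<longrightarrow> f (xs k) < \<infinity> \<and> (\<forall>l<k. steepest_descent f (xs l) (I l) (J l))" for k
  proof (induction k)
    case 0
    then show ?case
      using x0 run by (simp add: MSD_run_def dom_f_def)
  next
    case (Suc k)
    have "Suc k \<le> m \<Longrightarrow> steepest_descent f (xs k) (I k) (J k)"
      using Suc IJ[of k] noninf by (auto intro: steepest_descent_MSD_step)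
    then show ?case
      using Suc IJ[of k] by (auto simp: steepest_descent_def less_Suc_eq)
  qed
  then have "steepest_path f xs I J m"
    using IJ by (auto simp: steepest_path_def)
  then show thesis ..
qed

lemma steepest_path_stable:
  assumes mconv: "M_convex f" and noninf: "\<forall>y. f y \<noteq> -\<infinity>"
    and path: "steepest_path f xs I J m" and "k < l" "l \<le> m"
  shows "up_stable f (xs l) (J k) \<and> down_stable f (xs l) (I k)"
  using Suc_leI[OF \<open>k < l\<close>]
proof (induction l rule: dec_induct)
  case base
  have "k < m"
    using \<open>k < l\<close> \<open>l \<le> m\<close> by simp
  then have "steepest_descent f (xs k) (I k) (J k)" "xs (Suc k) = move (xs k) (I k) (J k)"
    using path by (auto simp: steepest_path_def)
  then show ?case
    by (simp add: up_stable_after_steepest_descent down_stable_after_steepest_descent)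
next
  case (step n)
  then obtain n' where "n = Suc n'"
    using Suc_le_D by blast
  have "n < m"
    using step \<open>l \<le> m\<close> by simp
  then have steep: "steepest_descent f (xs n) (I n) (J n)"
    and succ: "xs (Suc n) = move (xs n) (I n) (J n)"
    using path by (auto simp: steepest_path_def)
  have "f (xs n) < f (xs n')"
    using path \<open>n = Suc n'\<close> \<open>n < m\<close> by (simp add: steepest_path_def steepest_descent_def)
  then have "f (xs n) < \<infinity>"
    by auto
  then show ?case
    using step.IH up_stable_preserved[OF mconv noninf _ _ steep]
      down_stable_preserved[OF mconv noninf _ _ steep]
    unfolding succ by blast
qed

lemma steepest_path_no_reversal:
  assumes mconv: "M_convex f" and noninf: "\<forall>y. f y \<noteq> -\<infinity>"
    and path: "steepest_path f xs I J m" and "k < m" "l < m"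
  shows "I l \<noteq> J k"
proof -
  have steep: "steepest_descent f (xs k) (I k) (J k)" "steepest_descent f (xs l) (I l) (J l)"
    using path \<open>k < m\<close> \<open>l < m\<close> by (auto simp: steepest_path_def)
  consider "k < l" | "l < k" | "k = l"
    by linarith
  then show ?thesis
  proof cases
    case 1
    have "f (xs l) \<le> f (move (xs l) (J k) (J l))"
      using steepest_path_stable[OF mconv noninf path 1] \<open>l < m\<close> by (simp add: up_stable_def)
    then show ?thesis
      using steep(2) unfolding steepest_descent_def by (metis leD)
  next
    case 2
    have "f (xs k) \<le> f (move (xs k) (I k) (I l))"
      using steepest_path_stable[OF mconv noninf path 2] \<open>k < m\<close> by (simp add: down_stable_def)
    then show ?thesis
      using steep(1) unfolding steepest_descent_def by (metis leD)
  next
    case 3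
    then show ?thesis
      using steepest_descent_distinct[OF steep(1)] by simp
  qed
qed

lemma steepest_path_antimono_if_never_raised:
  "steepest_path f xs I J m \<Longrightarrow> \<forall>k<m. I k \<noteq> a \<Longrightarrow> \<forall>k<m. xs (Suc k) a \<le> xs k a"
  by (auto simp: steepest_path_def move_apply)

lemma steepest_path_mono_if_never_lowered:
  "steepest_path f xs I J m \<Longrightarrow> \<forall>k<m. J k \<noteq> a \<Longrightarrow> \<forall>k<m. xs k a \<le> xs (Suc k) a"
  by (auto simp: steepest_path_def move_apply)

lemma antimono_upto_const_if_le:
  fixes u :: "nat \<Rightarrow> int"
  assumes anti: "\<forall>k<m. u (Suc k) \<le> u k" and "u 0 \<le> u m"
  shows "\<forall>k<m. u (Suc k) = u k"
proof (intro allI impI)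
  fix k
  assume "k < m"
  have le: "u j \<le> u i" if "i \<le> j" "j \<le> m" for i j
    using that by (induction j rule: dec_induct) (auto intro: order_trans[OF anti[rule_format]])
  have "u k \<le> u 0" "u m \<le> u (Suc k)" "u (Suc k) \<le> u k"
    using le \<open>k < m\<close> anti by auto
  then show "u (Suc k) = u k"
    using \<open>u 0 \<le> u m\<close> by linarith
qed

lemma monotone_steps_follow_net_change:
  fixes u :: "nat \<Rightarrow> int"
  assumes "(\<forall>k<m. u (Suc k) \<le> u k) \<or> (\<forall>k<m. u k \<le> u (Suc k))"
  shows "(u m \<le> u 0 \<longrightarrow> (\<forall>k<m. u (Suc k) \<le> u k)) \<and>
         (u 0 \<le> u m \<longrightarrow> (\<forall>k<m. u k \<le> u (Suc k)))"
  using assms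
proof
  assume anti: "\<forall>k<m. u (Suc k) \<le> u k"
  then show ?thesis
    using antimono_upto_const_if_le[OF anti] by simp
next
  assume mono: "\<forall>k<m. u k \<le> u (Suc k)"
  then have "\<forall>k<m. - u (Suc k) \<le> - u k"
    by simp
  then show ?thesis
    using mono antimono_upto_const_if_le[of m "\<lambda>k. - u k"] by simp
qed

theorem mainTheorem7:
  fixes f :: "('a::finite \<Rightarrow> int) \<Rightarrow> ereal" and x0 :: "'a \<Rightarrow> int"
    and xs :: "nat \<Rightarrow> ('a \<Rightarrow> int)" and m :: nat
  assumes noninf: "\<forall>x. f x \<noteq> -\<infinity>"
    and mconv: "M_convex f"
    and bdd: "\<exists>B::int. \<forall>x\<in>dom_f f. \<forall>i. \<bar>x i\<bar> \<le> B"
    and x0: "x0 \<in> dom_f f"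
    and run: "MSD_run f x0 xs m"
  shows "\<forall>i. (xs m i \<le> x0 i \<longrightarrow> (\<forall>k<m. xs (Suc k) i \<le> xs k i)) \<and>
             (xs m i \<ge> x0 i \<longrightarrow> (\<forall>k<m. xs k i \<le> xs (Suc k) i))"
proof
  fix a
  obtain I J where path: "steepest_path f xs I J m"
    using MSD_run_steepest_path[OF noninf x0 run] .
  have "(\<forall>k<m. I k \<noteq> a) \<or> (\<forall>k<m. J k \<noteq> a)"
    using steepest_path_no_reversal[OF mconv noninf path] by metis
  then have "(\<forall>k<m. xs (Suc k) a \<le> xs k a) \<or> (\<forall>k<m. xs k a \<le> xs (Suc k) a)"
    using steepest_path_antimono_if_never_raised[OF path] steepest_path_mono_if_never_lowered[OF path]
    by blast
  from monotone_steps_follow_net_change[OF this] show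
    "(xs m a \<le> x0 a \<longrightarrow> (\<forall>k<m. xs (Suc k) a \<le> xs k a)) \<and>
     (xs m a \<ge> x0 a \<longrightarrow> (\<forall>k<m. xs k a \<le> xs (Suc k) a))"
    using run by (simp add: MSD_run_def)
qed

end
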